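(* Let $R$ be a Noetherian ring, $I\subseteq R$ an ideal, and $J_1=(f_1,\ldots,f_m)\subseteq I$, $J_2=(g_1,\ldots,g_m)\subseteq I$ ideals with $f_i-g_i\in I^2$ for $i=1,\ldots,m$, and assume $J_1\subseteq I$ is Aluffi torsion-free. Let $\mathcal Z_1,\mathcal Z_2\subseteq R^m$ be the syzygy modules of $(f_1,\dots,f_m)$ and $(g_1,\dots,g_m)$. Then $J_2\subseteq I$ is Aluffi torsion-free if and only if $\mathcal Z_1^*=\mathcal Z_2^*$ in $\mathrm{gr}_I(R^m)$.
   Context: A pair of ideals $J\subseteq I$ in a ring $R$ is called Aluffi torsion-free if $J\cap I^n=JI^{n-1}$ for all $n\ge1$ (with $I^0=R$). $\mathrm{gr}_I(R^m)=\bigoplus_{n\ge0}I^nR^m/I^{n+1}R^m$. For $0\ne a\in R^m$ let $n$ be the largest integer with $a\in I^nR^m$ (if it exists), and $a^*$ the class of $a$ in $I^nR^m/I^{n+1}R^m$ (and $a^*=0$ if $a\in\bigcap_n I^nR^m$). For a submodule $\mathcal Z\subseteq R^m$, its form module $\mathcal Z^*$ is the graded $\mathrm{gr}_I(R)$-submodule of $\mathrm{gr}_I(R^m)$ generated by $\{a^*:a\in\mathcal Z\}$. The syzygy module of $(f_1,\dots,f_m)$ is $\{(a_1,\ldots,a_m)\in R^m:\sum a_if_i=0\}$. *)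

theory Defs
  imports Main
begin

definition is_ideal :: "'a::comm_ring_1 set \<Rightarrow> bool" where
  "is_ideal J \<longleftrightarrow> 0 \<in> J \<and> (\<forall>x\<in>J. \<forall>y\<in>J. x + y \<in> J) \<and> (\<forall>r x. x \<in> J \<longrightarrow> r * x \<in> J)"

definition ideal_gen :: "'a::comm_ring_1 set \<Rightarrow> 'a set" where
  "ideal_gen S = \<Inter>{J. is_ideal J \<and> S \<subseteq> J}"

definition noetherian_ring :: "'a::comm_ring_1 itself \<Rightarrow> bool" where
  "noetherian_ring _ \<longleftrightarrow> (\<forall>J::'a set. is_ideal J \<longrightarrow> (\<exists>S. finite S \<and> J = ideal_gen S))"

definition ideal_prod :: "'a::comm_ring_1 set \<Rightarrow> 'a set \<Rightarrow> 'a set" where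
  "ideal_prod A B = ideal_gen {a * b | a b. a \<in> A \<and> b \<in> B}"

fun ideal_pow :: "'a::comm_ring_1 set \<Rightarrow> nat \<Rightarrow> 'a set" where
  "ideal_pow I 0 = UNIV"
| "ideal_pow I (Suc n) = ideal_prod (ideal_pow I n) I"

definition aluffi_torsion_free :: "'a::comm_ring_1 set \<Rightarrow> 'a set \<Rightarrow> bool" where
  "aluffi_torsion_free J I \<longleftrightarrow>
     (\<forall>n\<ge>1. J \<inter> ideal_pow I n = ideal_prod J (ideal_pow I (n - 1)))"

(* R^m: vectors indexed by {0..<m}, represented as functions nat \<Rightarrow> 'a vanishing at indices \<ge> m *)
definition vecs :: "nat \<Rightarrow> (nat \<Rightarrow> 'a::comm_ring_1) set" where
  "vecs m = {v. \<forall>i\<ge>m. v i = 0}"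

definition IM :: "'a::comm_ring_1 set \<Rightarrow> nat \<Rightarrow> nat \<Rightarrow> (nat \<Rightarrow> 'a) set" where
  "IM I m n = {v \<in> vecs m. \<forall>i<m. v i \<in> ideal_pow I n}"

definition syzygies :: "nat \<Rightarrow> (nat \<Rightarrow> 'a::comm_ring_1) \<Rightarrow> (nat \<Rightarrow> 'a) set" where
  "syzygies m f = {a \<in> vecs m. (\<Sum>i<m. a i * f i) = 0}"

definition coset :: "(nat \<Rightarrow> 'a::comm_ring_1) set \<Rightarrow> (nat \<Rightarrow> 'a) \<Rightarrow> (nat \<Rightarrow> 'a) set" where
  "coset A x = {(\<lambda>i. x i + v i) | v. v \<in> A}"

(* gr_I(R^m) = \<Oplus>_n I^n R^m / I^(n+1) R^m: an element is a function assigning to each degree n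
   a coset of I^(n+1) R^m contained in I^n R^m, with only finitely many nonzero components. *)
definition gr_mod :: "'a::comm_ring_1 set \<Rightarrow> nat \<Rightarrow> (nat \<Rightarrow> (nat \<Rightarrow> 'a) set) set" where
  "gr_mod I m = {G. (\<forall>n. \<exists>x\<in>IM I m n. G n = coset (IM I m (Suc n)) x)
                    \<and> finite {n. G n \<noteq> IM I m (Suc n)}}"

definition gr_zero :: "'a::comm_ring_1 set \<Rightarrow> nat \<Rightarrow> nat \<Rightarrow> (nat \<Rightarrow> 'a) set" where
  "gr_zero I m = (\<lambda>n. IM I m (Suc n))"

definition gr_add :: "(nat \<Rightarrow> (nat \<Rightarrow> 'a::comm_ring_1) set) \<Rightarrow> (nat \<Rightarrow> (nat \<Rightarrow> 'a) set) \<Rightarrow> nat \<Rightarrow> (nat \<Rightarrow> 'a) set" where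
  "gr_add G H = (\<lambda>n. {(\<lambda>i. a i + b i) | a b. a \<in> G n \<and> b \<in> H n})"

definition gr_hom :: "'a::comm_ring_1 set \<Rightarrow> nat \<Rightarrow> nat \<Rightarrow> (nat \<Rightarrow> 'a) \<Rightarrow> nat \<Rightarrow> (nat \<Rightarrow> 'a) set" where
  "gr_hom I m n x = (\<lambda>k. if k = n then coset (IM I m (Suc n)) x else IM I m (Suc k))"

(* action of the homogeneous element of gr_I(R) of degree k represented by r \<in> I^k *)
definition gr_smult :: "'a::comm_ring_1 set \<Rightarrow> nat \<Rightarrow> nat \<Rightarrow> 'a \<Rightarrow> (nat \<Rightarrow> (nat \<Rightarrow> 'a) set) \<Rightarrow> nat \<Rightarrow> (nat \<Rightarrow> 'a) set" where
  "gr_smult I m k r G = (\<lambda>j. if k \<le> j then {(\<lambda>i. r * v i + w i) | v w. v \<in> G (j - k) \<and> w \<in> IM I m (Suc j)}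
                             else IM I m (Suc j))"

definition init_form :: "'a::comm_ring_1 set \<Rightarrow> nat \<Rightarrow> (nat \<Rightarrow> 'a) \<Rightarrow> nat \<Rightarrow> (nat \<Rightarrow> 'a) set" where
  "init_form I m a = (if \<forall>n. a \<in> IM I m n then gr_zero I m
                      else gr_hom I m (GREATEST n. a \<in> IM I m n) a)"

(* graded gr_I(R)-submodule generated by a set of elements of gr_I(R^m): the smallest set
   containing them and 0, closed under addition and under multiplication by homogeneous
   elements of gr_I(R) (these generate gr_I(R) additively). *)
inductive_set gr_span :: "'a::comm_ring_1 set \<Rightarrow> nat \<Rightarrow> (nat \<Rightarrow> (nat \<Rightarrow> 'a) set) set \<Rightarrow> (nat \<Rightarrow> (nat \<Rightarrow> 'a) set) set"
  for I m S where
  span_zero: "gr_zero I m \<in> gr_span I m S"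
| span_gen: "G \<in> S \<Longrightarrow> G \<in> gr_span I m S"
| span_add: "G \<in> gr_span I m S \<Longrightarrow> H \<in> gr_span I m S \<Longrightarrow> gr_add G H \<in> gr_span I m S"
| span_smult: "r \<in> ideal_pow I k \<Longrightarrow> G \<in> gr_span I m S \<Longrightarrow> gr_smult I m k r G \<in> gr_span I m S"

definition form_module :: "'a::comm_ring_1 set \<Rightarrow> nat \<Rightarrow> (nat \<Rightarrow> 'a) set \<Rightarrow> (nat \<Rightarrow> (nat \<Rightarrow> 'a) set) set" where
  "form_module I m Z = gr_span I m (init_form I m ` Z)"

end

theory Submission
  imports Defs
begin

text \<open>
  The degree-d component of the form module Z* consists of the classes modulo I^(d+1) R^m
  of the elements of Z \<inter> I^d R^m. For the syzygies of f = (f_1,\<dots>,f_m) it lies inside the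
  set of classes of those a \<in> I^d R^m with \<Sum> a_i f_i \<in> I^(d+2), and this bigger set only
  depends on f modulo I^2. The pair (f) \<subseteq> I is Aluffi torsion-free exactly when the two
  sets agree in every degree: an expression \<Sum> c_i f_i \<in> I^(d+1) can then be rewritten with
  coefficients in I, I^2, \<dots>, I^d by subtracting syzygies one degree at a time.
  Hence if f is Aluffi torsion-free, Z_1* is the f-independent bigger set, and Z_2* is
  contained in it, with equality iff g is Aluffi torsion-free.
\<close>

lemma is_ideal_ideal_gen: "is_ideal (ideal_gen S)"
  unfolding is_ideal_def ideal_gen_def by auto

lemma ideal_gen_subset: "S \<subseteq> ideal_gen S"
  unfolding ideal_gen_def by auto

lemma ideal_gen_least: "is_ideal K \<Longrightarrow> S \<subseteq> K \<Longrightarrow> ideal_gen S \<subseteq> K"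
  unfolding ideal_gen_def by auto

lemma ideal_zero: "is_ideal K \<Longrightarrow> 0 \<in> K"
  by (simp add: is_ideal_def)

lemma ideal_add: "is_ideal K \<Longrightarrow> x \<in> K \<Longrightarrow> y \<in> K \<Longrightarrow> x + y \<in> K"
  by (simp add: is_ideal_def)

lemma ideal_mult_left: "is_ideal K \<Longrightarrow> x \<in> K \<Longrightarrow> r * x \<in> K"
  by (simp add: is_ideal_def)

lemma ideal_mult_right: "is_ideal K \<Longrightarrow> x \<in> K \<Longrightarrow> x * r \<in> K"
  by (metis ideal_mult_left mult.commute)

lemma ideal_uminus: "is_ideal K \<Longrightarrow> x \<in> K \<Longrightarrow> - x \<in> K"
  using ideal_mult_left[of K x "-1"] by simp

lemma ideal_diff: "is_ideal K \<Longrightarrow> x \<in> K \<Longrightarrow> y \<in> K \<Longrightarrow> x - y \<in> K"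
  using ideal_add[of K x "-y"] ideal_uminus by fastforce

lemma ideal_sum:
  assumes "is_ideal K" "\<And>i. i \<in> S \<Longrightarrow> h i \<in> K"
  shows "sum h S \<in> K"
  using assms(2) by (induction S rule: infinite_finite_induct)
    (auto intro: ideal_zero[OF assms(1)] ideal_add[OF assms(1)])

lemma ideal_diff_mem_iff:
  assumes K: "is_ideal K" and "x - y \<in> K"
  shows "x \<in> K \<longleftrightarrow> y \<in> K"
  using ideal_diff[OF K _ assms(2), of x] ideal_add[OF K assms(2), of y] by auto

lemma is_ideal_UNIV: "is_ideal UNIV"
  by (simp add: is_ideal_def)

lemma is_ideal_ideal_pow: "is_ideal (ideal_pow I n)"
  by (cases n) (auto simp: is_ideal_UNIV ideal_prod_def is_ideal_ideal_gen)

lemma ideal_prod_mem: "a \<in> A \<Longrightarrow> b \<in> B \<Longrightarrow> a * b \<in> ideal_prod A B"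
  unfolding ideal_prod_def by (rule subsetD[OF ideal_gen_subset]) blast

lemma ideal_pow_mult:
  "r \<in> ideal_pow I k \<Longrightarrow> s \<in> ideal_pow I j \<Longrightarrow> r * s \<in> ideal_pow I (k + j)"
proof (induction j arbitrary: s)
  case 0
  then show ?case using ideal_mult_right[OF is_ideal_ideal_pow] by simp
next
  case (Suc j)
  let ?K = "{s. r * s \<in> ideal_pow I (k + Suc j)}"
  have K: "is_ideal ?K"
    unfolding is_ideal_def using is_ideal_ideal_pow[of I "k + Suc j"]
    by (auto simp: distrib_left intro: ideal_zero ideal_add)
       (metis ideal_mult_left mult.left_commute)
  have "a * b \<in> ?K" if "a \<in> ideal_pow I j" "b \<in> I" for a b
    using ideal_prod_mem[OF Suc.IH[OF Suc.prems(1) that(1)] that(2)] by (simp add: mult.assoc)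
  then have "ideal_pow I (Suc j) \<subseteq> ?K"
    unfolding ideal_pow.simps ideal_prod_def by (intro ideal_gen_least[OF K]) blast
  then show ?case using Suc.prems by blast
qed

lemma ideal_pow_Suc_subset: "ideal_pow I (Suc n) \<subseteq> ideal_pow I n"
  unfolding ideal_pow.simps ideal_prod_def
  by (intro ideal_gen_least is_ideal_ideal_pow) (auto intro: ideal_mult_right[OF is_ideal_ideal_pow])

lemma ideal_pow_antimono: "n \<le> n' \<Longrightarrow> ideal_pow I n' \<subseteq> ideal_pow I n"
  by (induction n' rule: dec_induct) (use ideal_pow_Suc_subset in blast)+

definition lin_comb :: "(nat \<Rightarrow> 'a::comm_ring_1) \<Rightarrow> nat \<Rightarrow> 'a set \<Rightarrow> 'a set" where
  "lin_comb f m A = {s. \<exists>c. (\<forall>i<m. c i \<in> A) \<and> s = (\<Sum>i<m. c i * f i)}"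

lemma lin_comb_memI:
  "(\<And>i. i < m \<Longrightarrow> c i \<in> A) \<Longrightarrow> s = (\<Sum>i<m. c i * f i) \<Longrightarrow> s \<in> lin_comb f m A"
  unfolding lin_comb_def by blast

lemma lin_comb_memE:
  assumes "s \<in> lin_comb f m A"
  obtains c where "\<And>i. i < m \<Longrightarrow> c i \<in> A" "s = (\<Sum>i<m. c i * f i)"
  using assms unfolding lin_comb_def by blast

lemma lin_comb_mono: "A \<subseteq> B \<Longrightarrow> lin_comb f m A \<subseteq> lin_comb f m B"
  unfolding lin_comb_def by blast

lemma is_ideal_lin_comb:
  assumes A: "is_ideal A"
  shows "is_ideal (lin_comb f m A)"
  unfolding is_ideal_def
proof (intro conjI ballI allI impI)
  show "0 \<in> lin_comb f m A"
    by (rule lin_comb_memI[of _ "\<lambda>i. 0"]) (simp_all add: ideal_zero A)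
next
  fix x y assume "x \<in> lin_comb f m A" "y \<in> lin_comb f m A"
  then obtain c d where "\<And>i. i < m \<Longrightarrow> c i \<in> A" "x = (\<Sum>i<m. c i * f i)"
    "\<And>i. i < m \<Longrightarrow> d i \<in> A" "y = (\<Sum>i<m. d i * f i)" by (elim lin_comb_memE) blast
  then show "x + y \<in> lin_comb f m A"
    by (intro lin_comb_memI[of _ "\<lambda>i. c i + d i"]) (simp_all add: ideal_add A distrib_right sum.distrib)
next
  fix r x assume "x \<in> lin_comb f m A"
  then obtain c where "\<And>i. i < m \<Longrightarrow> c i \<in> A" "x = (\<Sum>i<m. c i * f i)" by (elim lin_comb_memE) blast
  then show "r * x \<in> lin_comb f m A"
    by (intro lin_comb_memI[of _ "\<lambda>i. r * c i"])
      (simp_all add: ideal_mult_left A sum_distrib_left mult.assoc)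
qed

lemma lin_comb_subset_ideal:
  "is_ideal K \<Longrightarrow> (\<And>i. i < m \<Longrightarrow> f i \<in> K) \<Longrightarrow> lin_comb f m A \<subseteq> K"
  by (auto elim!: lin_comb_memE intro!: ideal_sum ideal_mult_left)

lemma generator_in_lin_comb:
  assumes "i < m"
  shows "f i \<in> lin_comb f m UNIV"
proof (rule lin_comb_memI[of _ "\<lambda>j. if j = i then 1 else 0"])
  have "(\<Sum>j<m. (if j = i then 1 else 0) * f j) = (\<Sum>j<m. if j = i then f j else 0)"
    by (rule sum.cong) auto
  then show "f i = (\<Sum>j<m. (if j = i then 1 else 0) * f j)"
    using assms by simp
qed simp

lemma ideal_gen_eq_lin_comb: "ideal_gen (f ` {..<m}) = lin_comb f m UNIV"
proof
  show "ideal_gen (f ` {..<m}) \<subseteq> lin_comb f m UNIV"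
    using generator_in_lin_comb
    by (intro ideal_gen_least is_ideal_lin_comb is_ideal_UNIV image_subsetI) simp
  show "lin_comb f m UNIV \<subseteq> ideal_gen (f ` {..<m})"
    using ideal_gen_subset[of "f ` {..<m}"] by (intro lin_comb_subset_ideal is_ideal_ideal_gen) auto
qed

lemma ideal_prod_lin_comb:
  assumes A: "is_ideal A"
  shows "ideal_prod (lin_comb f m UNIV) A = lin_comb f m A"
proof
  have "x * b \<in> lin_comb f m A" if x: "x \<in> lin_comb f m UNIV" and b: "b \<in> A" for x b
  proof -
    obtain c where "x = (\<Sum>i<m. c i * f i)" using x by (elim lin_comb_memE) blast
    then have "x * b = (\<Sum>i<m. (c i * b) * f i)"
      by (simp add: sum_distrib_right mult.assoc mult.commute[of b])
    then show ?thesis by (rule lin_comb_memI[rotated]) (rule ideal_mult_left[OF A b])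
  qed
  then show "ideal_prod (lin_comb f m UNIV) A \<subseteq> lin_comb f m A"
    unfolding ideal_prod_def by (intro ideal_gen_least is_ideal_lin_comb A) auto
next
  show "lin_comb f m A \<subseteq> ideal_prod (lin_comb f m UNIV) A"
  proof
    fix x assume "x \<in> lin_comb f m A"
    then obtain c where c: "\<And>i. i < m \<Longrightarrow> c i \<in> A" "x = (\<Sum>i<m. c i * f i)"
      by (elim lin_comb_memE) blast
    have "c i * f i \<in> ideal_prod (lin_comb f m UNIV) A" if "i < m" for i
      using ideal_prod_mem[OF generator_in_lin_comb[of i m f, OF that] c(1)[OF that]]
      by (simp only: mult.commute)
    then show "x \<in> ideal_prod (lin_comb f m UNIV) A"
      unfolding c(2) ideal_prod_def by (intro ideal_sum is_ideal_ideal_gen) auto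
  qed
qed

lemma lin_comb_ideal_pow_subset:
  assumes "\<And>i. i < m \<Longrightarrow> f i \<in> I"
  shows "lin_comb f m (ideal_pow I d) \<subseteq> ideal_pow I (Suc d)"
proof
  fix x assume "x \<in> lin_comb f m (ideal_pow I d)"
  then obtain c where c: "\<And>i. i < m \<Longrightarrow> c i \<in> ideal_pow I d" "x = (\<Sum>i<m. c i * f i)"
    by (elim lin_comb_memE) blast
  show "x \<in> ideal_pow I (Suc d)"
    unfolding c(2) using c(1) assms
    by (intro ideal_sum[OF is_ideal_ideal_pow]) (simp add: ideal_prod_mem)
qed

lemma all_ge_1_iff_all_Suc: "(\<forall>n\<ge>1. P n (n - 1)) \<longleftrightarrow> (\<forall>d. P (Suc d) d)"
proof
  assume P: "\<forall>n\<ge>1. P n (n - 1)"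
  show "\<forall>d. P (Suc d) d"
    using P[rule_format, of "Suc _"] by simp
next
  assume P: "\<forall>d. P (Suc d) d"
  show "\<forall>n\<ge>1. P n (n - 1)"
  proof (intro allI impI)
    fix n :: nat assume "n \<ge> 1"
    then obtain d where "n = Suc d" by (cases n) auto
    then show "P n (n - 1)" using P by simp
  qed
qed

lemma aluffi_torsion_free_iff_lin_comb:
  assumes "\<And>i. i < m \<Longrightarrow> f i \<in> I"
  shows "aluffi_torsion_free (ideal_gen (f ` {..<m})) I \<longleftrightarrow>
    (\<forall>d. lin_comb f m UNIV \<inter> ideal_pow I (Suc d) \<subseteq> lin_comb f m (ideal_pow I d))"
proof -
  have sub: "lin_comb f m (ideal_pow I d) \<subseteq> lin_comb f m UNIV \<inter> ideal_pow I (Suc d)" for d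
    by (intro Int_greatest lin_comb_mono lin_comb_ideal_pow_subset assms) simp_all
  have "aluffi_torsion_free (ideal_gen (f ` {..<m})) I \<longleftrightarrow>
    (\<forall>n\<ge>1. lin_comb f m UNIV \<inter> ideal_pow I n = lin_comb f m (ideal_pow I (n - 1)))"
    unfolding aluffi_torsion_free_def ideal_gen_eq_lin_comb ideal_prod_lin_comb[OF is_ideal_ideal_pow] ..
  also have "\<dots> \<longleftrightarrow>
    (\<forall>d. lin_comb f m UNIV \<inter> ideal_pow I (Suc d) = lin_comb f m (ideal_pow I d))"
    by (rule all_ge_1_iff_all_Suc[of "\<lambda>n k. lin_comb f m UNIV \<inter> ideal_pow I n = lin_comb f m (ideal_pow I k)"])
  also have "\<dots> \<longleftrightarrow>
    (\<forall>d. lin_comb f m UNIV \<inter> ideal_pow I (Suc d) \<subseteq> lin_comb f m (ideal_pow I d))"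
    using sub by (simp only: set_eq_subset simp_thms)
  finally show ?thesis .
qed

definition additive_subgroup :: "(nat \<Rightarrow> 'a::comm_ring_1) set \<Rightarrow> bool" where
  "additive_subgroup A \<longleftrightarrow> (\<lambda>i. 0) \<in> A \<and> (\<forall>a\<in>A. \<forall>b\<in>A. (\<lambda>i. a i + b i) \<in> A)
     \<and> (\<forall>a\<in>A. (\<lambda>i. - a i) \<in> A)"

lemma additive_subgroup_zero: "additive_subgroup A \<Longrightarrow> (\<lambda>i. 0) \<in> A"
  by (simp add: additive_subgroup_def)

lemma additive_subgroup_add: "additive_subgroup A \<Longrightarrow> a \<in> A \<Longrightarrow> b \<in> A \<Longrightarrow> (\<lambda>i. a i + b i) \<in> A"
  by (simp add: additive_subgroup_def)

lemma additive_subgroup_diff: "additive_subgroup A \<Longrightarrow> a \<in> A \<Longrightarrow> b \<in> A \<Longrightarrow> (\<lambda>i. a i - b i) \<in> A"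
  using additive_subgroup_add[of A a "\<lambda>i. - b i"] by (simp add: additive_subgroup_def)

lemma coset_memI: "v \<in> A \<Longrightarrow> z = (\<lambda>i. x i + v i) \<Longrightarrow> z \<in> coset A x"
  unfolding coset_def by blast

lemma coset_eq_iff:
  assumes A: "additive_subgroup A"
  shows "coset A x = coset A y \<longleftrightarrow> (\<lambda>i. x i - y i) \<in> A"
proof
  assume "coset A x = coset A y"
  moreover have "x \<in> coset A x"
    unfolding coset_def using additive_subgroup_zero[OF A] by force
  ultimately obtain v where "v \<in> A" "x = (\<lambda>i. y i + v i)" unfolding coset_def by blast
  then show "(\<lambda>i. x i - y i) \<in> A" by simp
next
  assume xy: "(\<lambda>i. x i - y i) \<in> A"
  have sub: "coset A x \<subseteq> coset A y" if d: "(\<lambda>i. x i - y i) \<in> A" for x y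
  proof
    fix z assume "z \<in> coset A x"
    then obtain v where v: "v \<in> A" "z = (\<lambda>i. x i + v i)" unfolding coset_def by blast
    then have "z = (\<lambda>i. y i + ((x i - y i) + v i))" by (simp add: algebra_simps)
    moreover have "(\<lambda>i. (x i - y i) + v i) \<in> A" using additive_subgroup_add[OF A d v(1)] by simp
    ultimately show "z \<in> coset A y" by (rule coset_memI[rotated])
  qed
  have "(\<lambda>i. y i - x i) \<in> A"
    using additive_subgroup_diff[OF A additive_subgroup_zero[OF A] xy] by simp
  then show "coset A x = coset A y" using sub xy by blast
qed

lemma coset_zero: "coset A (\<lambda>i. 0) = A"
  unfolding coset_def by auto

lemma coset_eq_self: "additive_subgroup A \<Longrightarrow> x \<in> A \<Longrightarrow> coset A x = A"
  using coset_eq_iff[of A x "\<lambda>i. 0"] by (simp add: coset_zero)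

lemma coset_add:
  assumes A: "additive_subgroup A"
  shows "{(\<lambda>i. a i + b i) | a b. a \<in> coset A x \<and> b \<in> coset A y} = coset A (\<lambda>i. x i + y i)"
proof (intro equalityI subsetI)
  fix z assume "z \<in> {(\<lambda>i. a i + b i) | a b. a \<in> coset A x \<and> b \<in> coset A y}"
  then obtain v w where vw: "v \<in> A" "w \<in> A" "z = (\<lambda>i. (x i + v i) + (y i + w i))"
    unfolding coset_def by blast
  then have "z = (\<lambda>i. (x i + y i) + (v i + w i))" by (simp add: algebra_simps)
  then show "z \<in> coset A (\<lambda>i. x i + y i)"
    using additive_subgroup_add[OF A vw(1,2)] by (rule coset_memI[rotated])
next
  fix z assume "z \<in> coset A (\<lambda>i. x i + y i)"
  then obtain v where v: "v \<in> A" "z = (\<lambda>i. (x i + v i) + y i)"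
    unfolding coset_def by (auto simp: algebra_simps)
  have "(\<lambda>i. x i + v i) \<in> coset A x" "y \<in> coset A y"
    by (rule coset_memI, fact v(1), simp) (rule coset_memI[OF additive_subgroup_zero[OF A]], simp)
  with v(2) show "z \<in> {(\<lambda>i. a i + b i) | a b. a \<in> coset A x \<and> b \<in> coset A y}"
    by (intro CollectI exI[of _ "\<lambda>i. x i + v i"] exI[of _ y]) simp
qed

lemma additive_subgroup_IM: "additive_subgroup (IM I m n)"
  unfolding additive_subgroup_def IM_def vecs_def
  by (auto simp: ideal_zero[OF is_ideal_ideal_pow]
      intro!: ideal_add[OF is_ideal_ideal_pow] ideal_uminus[OF is_ideal_ideal_pow])

lemma IM_smult: "r \<in> ideal_pow I k \<Longrightarrow> x \<in> IM I m n \<Longrightarrow> (\<lambda>i. r * x i) \<in> IM I m (k + n)"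
  unfolding IM_def vecs_def by (auto intro!: ideal_pow_mult)

lemma IM_antimono: "n \<le> n' \<Longrightarrow> IM I m n' \<subseteq> IM I m n"
  unfolding IM_def using ideal_pow_antimono by blast

lemma IM_0: "IM I m 0 = vecs m"
  unfolding IM_def by auto

lemma smult_coset:
  assumes r: "r \<in> ideal_pow I k" and "k \<le> j"
  shows "{(\<lambda>i. r * v i + w i) | v w. v \<in> coset (IM I m (Suc (j - k))) x \<and> w \<in> IM I m (Suc j)}
         = coset (IM I m (Suc j)) (\<lambda>i. r * x i)"
proof (intro equalityI subsetI)
  fix z assume "z \<in> {(\<lambda>i. r * v i + w i) | v w. v \<in> coset (IM I m (Suc (j - k))) x \<and> w \<in> IM I m (Suc j)}"
  then obtain u w where u: "u \<in> IM I m (Suc (j - k))" "w \<in> IM I m (Suc j)"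
    "z = (\<lambda>i. r * (x i + u i) + w i)" unfolding coset_def by blast
  have "(\<lambda>i. r * u i) \<in> IM I m (Suc j)"
    using IM_smult[OF r u(1)] \<open>k \<le> j\<close> by (simp add: Suc_diff_le)
  then have "(\<lambda>i. r * u i + w i) \<in> IM I m (Suc j)"
    using additive_subgroup_add[OF additive_subgroup_IM _ u(2)] by blast
  moreover have "z = (\<lambda>i. r * x i + (r * u i + w i))" using u(3) by (simp add: algebra_simps)
  ultimately show "z \<in> coset (IM I m (Suc j)) (\<lambda>i. r * x i)" by (rule coset_memI)
next
  fix z assume "z \<in> coset (IM I m (Suc j)) (\<lambda>i. r * x i)"
  then obtain w where w: "w \<in> IM I m (Suc j)" "z = (\<lambda>i. r * x i + w i)"
    unfolding coset_def by auto
  have "x \<in> coset (IM I m (Suc (j - k))) x"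
    by (rule coset_memI[OF additive_subgroup_zero[OF additive_subgroup_IM]]) simp
  then show "z \<in> {(\<lambda>i. r * v i + w i) | v w. v \<in> coset (IM I m (Suc (j - k))) x \<and> w \<in> IM I m (Suc j)}"
    using w by (intro CollectI exI[of _ x] exI[of _ w]) simp
qed

definition is_submodule :: "nat \<Rightarrow> (nat \<Rightarrow> 'a::comm_ring_1) set \<Rightarrow> bool" where
  "is_submodule m Z \<longleftrightarrow> Z \<subseteq> vecs m \<and> (\<lambda>i. 0) \<in> Z \<and> (\<forall>a\<in>Z. \<forall>b\<in>Z. (\<lambda>i. a i + b i) \<in> Z)
     \<and> (\<forall>r. \<forall>a\<in>Z. (\<lambda>i. r * a i) \<in> Z)"

lemma is_submodule_syzygies: "is_submodule m (syzygies m f)"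
  unfolding is_submodule_def syzygies_def vecs_def
  by (auto simp: distrib_right sum.distrib mult.assoc sum_distrib_left[symmetric])

definition form_component ::
  "'a::comm_ring_1 set \<Rightarrow> nat \<Rightarrow> (nat \<Rightarrow> 'a) set \<Rightarrow> nat \<Rightarrow> (nat \<Rightarrow> 'a) set set" where
  "form_component I m Z d = {coset (IM I m (Suc d)) x | x. x \<in> Z \<and> x \<in> IM I m d}"

definition graded_forms ::
  "'a::comm_ring_1 set \<Rightarrow> nat \<Rightarrow> (nat \<Rightarrow> 'a) set \<Rightarrow> (nat \<Rightarrow> (nat \<Rightarrow> 'a) set) set" where
  "graded_forms I m Z =
     {G. (\<forall>n. G n \<in> form_component I m Z n) \<and> finite {n. G n \<noteq> IM I m (Suc n)}}"

lemma form_componentI: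
  "x \<in> Z \<Longrightarrow> x \<in> IM I m d \<Longrightarrow> X = coset (IM I m (Suc d)) x \<Longrightarrow> X \<in> form_component I m Z d"
  unfolding form_component_def by blast

lemma form_componentE:
  assumes "X \<in> form_component I m Z d"
  obtains x where "x \<in> Z" "x \<in> IM I m d" "X = coset (IM I m (Suc d)) x"
  using assms unfolding form_component_def by blast

lemma IM_in_form_component: "is_submodule m Z \<Longrightarrow> IM I m (Suc n) \<in> form_component I m Z n"
  by (rule form_componentI[of "\<lambda>i. 0"])
    (simp_all add: is_submodule_def coset_zero additive_subgroup_zero[OF additive_subgroup_IM])

lemma gr_zero_in_graded_forms: "is_submodule m Z \<Longrightarrow> gr_zero I m \<in> graded_forms I m Z"
  unfolding graded_forms_def gr_zero_def using IM_in_form_component by auto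

lemma gr_hom_in_graded_forms:
  assumes "is_submodule m Z" "x \<in> Z" "x \<in> IM I m N"
  shows "gr_hom I m N x \<in> graded_forms I m Z"
proof -
  have "gr_hom I m N x n \<in> form_component I m Z n" for n
    using IM_in_form_component[OF assms(1)] assms(2,3)
    unfolding gr_hom_def by (auto simp: form_component_def)
  moreover have "{n. gr_hom I m N x n \<noteq> IM I m (Suc n)} \<subseteq> {N}"
    unfolding gr_hom_def by auto
  ultimately show ?thesis unfolding graded_forms_def using finite_subset by blast
qed

lemma init_form_eq_gr_hom:
  assumes "x \<in> IM I m s" "x \<notin> IM I m (Suc s)"
  shows "init_form I m x = gr_hom I m s x"
proof -
  have "(GREATEST n. x \<in> IM I m n) = s"
  proof (rule Greatest_equality)
    fix n assume "x \<in> IM I m n"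
    then show "n \<le> s" using assms(2) IM_antimono[of "Suc s" n I m] by (cases "Suc s \<le> n") auto
  qed (rule assms(1))
  then show ?thesis using assms(2) by (auto simp: init_form_def)
qed

lemma mem_IM_Greatest:
  assumes "x \<in> vecs m" "\<not> (\<forall>n. x \<in> IM I m n)"
  shows "x \<in> IM I m (GREATEST n. x \<in> IM I m n)"
proof -
  obtain n0 where n0: "x \<notin> IM I m n0" using assms(2) by blast
  have "n \<le> n0" if "x \<in> IM I m n" for n
    using IM_antimono[of n0 n I m] that n0 by (cases "n0 \<le> n") auto
  moreover have "x \<in> IM I m 0" using assms(1) by (simp add: IM_0)
  ultimately show ?thesis by (rule GreatestI_nat[rotated])
qed

lemma init_form_in_graded_forms:
  assumes Z: "is_submodule m Z" and x: "x \<in> Z"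
  shows "init_form I m x \<in> graded_forms I m Z"
proof (cases "\<forall>n. x \<in> IM I m n")
  case True
  then show ?thesis by (simp add: init_form_def gr_zero_in_graded_forms[OF Z])
next
  case False
  have "x \<in> vecs m" using Z x by (auto simp: is_submodule_def)
  then show ?thesis
    unfolding init_form_def if_not_P[OF False] by (rule gr_hom_in_graded_forms[OF Z x mem_IM_Greatest]) fact+
qed

lemma gr_add_in_graded_forms:
  assumes Z: "is_submodule m Z" and G: "G \<in> graded_forms I m Z" and H: "H \<in> graded_forms I m Z"
  shows "gr_add G H \<in> graded_forms I m Z"
proof -
  let ?A = "\<lambda>n. IM I m (Suc n)"
  have "gr_add G H n \<in> form_component I m Z n" for n
  proof -
    obtain x where x: "x \<in> Z" "x \<in> IM I m n" "G n = coset (?A n) x"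
      using G unfolding graded_forms_def form_component_def by blast
    obtain y where y: "y \<in> Z" "y \<in> IM I m n" "H n = coset (?A n) y"
      using H unfolding graded_forms_def form_component_def by blast
    have "gr_add G H n = coset (?A n) (\<lambda>i. x i + y i)"
      unfolding gr_add_def x(3) y(3) by (rule coset_add[OF additive_subgroup_IM])
    moreover have "(\<lambda>i. x i + y i) \<in> Z" using Z x y by (simp add: is_submodule_def)
    moreover have "(\<lambda>i. x i + y i) \<in> IM I m n"
      using additive_subgroup_add[OF additive_subgroup_IM] x y by blast
    ultimately show ?thesis unfolding form_component_def by blast
  qed
  moreover have "gr_add G H n = ?A n" if "G n = ?A n" "H n = ?A n" for n
    using coset_add[OF additive_subgroup_IM, of I m "Suc n" "\<lambda>i. 0" "\<lambda>i. 0"] that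
    by (simp add: gr_add_def coset_zero)
  then have "{n. gr_add G H n \<noteq> ?A n} \<subseteq> {n. G n \<noteq> ?A n} \<union> {n. H n \<noteq> ?A n}"
    by blast
  ultimately show ?thesis
    using G H unfolding graded_forms_def by (auto intro: finite_subset)
qed

lemma gr_smult_in_graded_forms:
  assumes Z: "is_submodule m Z" and r: "r \<in> ideal_pow I k" and G: "G \<in> graded_forms I m Z"
  shows "gr_smult I m k r G \<in> graded_forms I m Z"
proof -
  let ?A = "\<lambda>n. IM I m (Suc n)"
  have "gr_smult I m k r G j \<in> form_component I m Z j" for j
  proof (cases "k \<le> j")
    case True
    obtain x where x: "x \<in> Z" "x \<in> IM I m (j - k)" "G (j - k) = coset (?A (j - k)) x"
      using G unfolding graded_forms_def form_component_def by blast
    have "gr_smult I m k r G j = coset (?A j) (\<lambda>i. r * x i)"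
      unfolding gr_smult_def x(3) using True smult_coset[OF r True] by simp
    moreover have "(\<lambda>i. r * x i) \<in> Z" using Z x by (simp add: is_submodule_def)
    moreover have "(\<lambda>i. r * x i) \<in> IM I m j" using IM_smult[OF r x(2)] True by simp
    ultimately show ?thesis unfolding form_component_def by blast
  qed (simp add: gr_smult_def IM_in_form_component[OF Z])
  moreover have "{j. gr_smult I m k r G j \<noteq> ?A j} \<subseteq> (\<lambda>n. n + k) ` {n. G n \<noteq> ?A n}"
  proof
    fix j assume j: "j \<in> {j. gr_smult I m k r G j \<noteq> ?A j}"
    then have kj: "k \<le> j" by (auto simp: gr_smult_def)
    have "G (j - k) \<noteq> ?A (j - k)"
    proof
      assume "G (j - k) = ?A (j - k)"
      then have "gr_smult I m k r G j = coset (?A j) (\<lambda>i. r * 0)"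
        using smult_coset[OF r kj, of m "\<lambda>i. 0"] kj by (simp add: gr_smult_def coset_zero)
      then show False using j by (simp add: coset_zero)
    qed
    then show "j \<in> (\<lambda>n. n + k) ` {n. G n \<noteq> ?A n}" using kj
      by (intro image_eqI[of _ _ "j - k"]) auto
  qed
  then have "finite {j. gr_smult I m k r G j \<noteq> ?A j}"
    by (rule finite_subset) (use G in \<open>simp add: graded_forms_def\<close>)
  ultimately show ?thesis unfolding graded_forms_def by blast
qed

lemma form_module_subset_graded_forms:
  assumes Z: "is_submodule m Z"
  shows "form_module I m Z \<subseteq> graded_forms I m Z"
proof
  fix G assume "G \<in> form_module I m Z"
  then show "G \<in> graded_forms I m Z"
    unfolding form_module_def
  proof (induction rule: gr_span.induct)
    case span_zero
    then show ?case by (rule gr_zero_in_graded_forms[OF Z])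
  next
    case (span_gen G)
    then show ?case using init_form_in_graded_forms[OF Z] by blast
  next
    case (span_add G H)
    then show ?case using gr_add_in_graded_forms[OF Z] by blast
  next
    case (span_smult r k G)
    then show ?case using gr_smult_in_graded_forms[OF Z] by blast
  qed
qed

lemma gr_hom_in_form_module:
  assumes x: "x \<in> Z" "x \<in> IM I m s"
  shows "gr_hom I m s x \<in> form_module I m Z"
proof (cases "x \<in> IM I m (Suc s)")
  case True
  then have "gr_hom I m s x = gr_zero I m"
    by (intro ext) (simp add: gr_hom_def gr_zero_def coset_eq_self[OF additive_subgroup_IM])
  then show ?thesis unfolding form_module_def by (simp add: gr_span.span_zero)
next
  case False
  then have "init_form I m x = gr_hom I m s x" using init_form_eq_gr_hom x(2) by blast
  then show ?thesis unfolding form_module_def using x(1) by (metis gr_span.span_gen imageI)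
qed

lemma graded_forms_split:
  assumes Z: "is_submodule m Z" and G: "G \<in> graded_forms I m Z"
  obtains x H where "x \<in> Z" "x \<in> IM I m s" "H \<in> graded_forms I m Z"
    "{n. H n \<noteq> IM I m (Suc n)} = {n. G n \<noteq> IM I m (Suc n)} - {s}"
    "G = gr_add H (gr_hom I m s x)"
proof -
  have "G s \<in> form_component I m Z s" using G by (simp add: graded_forms_def)
  then obtain x where x: "x \<in> Z" "x \<in> IM I m s" "G s = coset (IM I m (Suc s)) x"
    by (rule form_componentE)
  define H where "H = G(s := IM I m (Suc s))"
  have "H n \<in> form_component I m Z n" for n
    using G IM_in_form_component[OF Z] unfolding H_def graded_forms_def by auto
  moreover have H_supp: "{n. H n \<noteq> IM I m (Suc n)} = {n. G n \<noteq> IM I m (Suc n)} - {s}"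
    unfolding H_def by auto
  ultimately have H: "H \<in> graded_forms I m Z"
    using G unfolding graded_forms_def by auto
  have "G n = gr_add H (gr_hom I m s x) n" for n
  proof -
    have "G n \<in> form_component I m Z n" using G by (simp add: graded_forms_def)
    then obtain y where y: "G n = coset (IM I m (Suc n)) y"
      by (rule form_componentE)
    show ?thesis
    proof (cases "n = s")
      case True
      then show ?thesis
        using coset_add[OF additive_subgroup_IM, of I m "Suc s" "\<lambda>i. 0" x] x(3)
        by (simp add: gr_add_def H_def gr_hom_def coset_zero)
    next
      case False
      then show ?thesis
        using coset_add[OF additive_subgroup_IM, of I m "Suc n" y "\<lambda>i. 0"] y
        by (simp add: gr_add_def H_def gr_hom_def coset_zero)
    qed
  qed
  then show ?thesis using that x(1,2) H H_supp by blast
qed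

lemma graded_forms_subset_form_module:
  assumes Z: "is_submodule m Z"
  shows "graded_forms I m Z \<subseteq> form_module I m Z"
proof
  fix G assume G: "G \<in> graded_forms I m Z"
  have "finite {n. G n \<noteq> IM I m (Suc n)}" using G unfolding graded_forms_def by blast
  then show "G \<in> form_module I m Z"
    using G
  proof (induction "{n. G n \<noteq> IM I m (Suc n)}" arbitrary: G rule: finite_induct)
    case empty
    then have "G = gr_zero I m" unfolding gr_zero_def by auto
    then show ?case unfolding form_module_def by (simp add: gr_span.span_zero)
  next
    case (insert s S)
    obtain x H where x: "x \<in> Z" "x \<in> IM I m s" and H: "H \<in> graded_forms I m Z"
      and H_supp: "{n. H n \<noteq> IM I m (Suc n)} = S"
      and G: "G = gr_add H (gr_hom I m s x)"
      using graded_forms_split[OF Z insert.prems, of s] insert.hyps(2,4) by (metis Diff_insert_absorb)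
    have "H \<in> form_module I m Z" using insert.hyps(3)[OF H_supp[symmetric] H] .
    then show ?case
      unfolding G form_module_def using gr_hom_in_form_module[OF x, unfolded form_module_def]
      by (rule gr_span.span_add)
  qed
qed

lemma form_module_eq_graded_forms: "is_submodule m Z \<Longrightarrow> form_module I m Z = graded_forms I m Z"
  using form_module_subset_graded_forms graded_forms_subset_form_module by blast

lemma form_component_eq_components:
  assumes Z: "is_submodule m Z"
  shows "form_component I m Z d = (\<lambda>G. G d) ` graded_forms I m Z"
proof (intro equalityI subsetI)
  fix X assume "X \<in> form_component I m Z d"
  then obtain x where x: "x \<in> Z" "x \<in> IM I m d" "X = coset (IM I m (Suc d)) x"
    by (rule form_componentE)
  then have "X = gr_hom I m d x d" by (simp add: gr_hom_def)
  then show "X \<in> (\<lambda>G. G d) ` graded_forms I m Z"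
    using gr_hom_in_graded_forms[OF Z x(1,2)] by (rule image_eqI)
next
  fix X assume "X \<in> (\<lambda>G. G d) ` graded_forms I m Z"
  then show "X \<in> form_component I m Z d" unfolding graded_forms_def by blast
qed

lemma form_module_eq_iff_form_components_eq:
  assumes "is_submodule m Z1" "is_submodule m Z2"
  shows "form_module I m Z1 = form_module I m Z2 \<longleftrightarrow>
    (\<forall>d. form_component I m Z1 d = form_component I m Z2 d)"
proof
  assume "form_module I m Z1 = form_module I m Z2"
  then show "\<forall>d. form_component I m Z1 d = form_component I m Z2 d"
    by (simp add: form_component_eq_components assms form_module_eq_graded_forms[symmetric])
next
  assume "\<forall>d. form_component I m Z1 d = form_component I m Z2 d"
  then show "form_module I m Z1 = form_module I m Z2"
    by (simp add: form_module_eq_graded_forms assms graded_forms_def)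
qed

text \<open>
  The degree-d part of the kernel of the map gr_I(R^m) \<rightarrow> gr_I(R) of degree one sending
  a basis vector e_i to the class of f_i in I/I^2.
\<close>
definition initial_relations ::
  "'a::comm_ring_1 set \<Rightarrow> nat \<Rightarrow> (nat \<Rightarrow> 'a) \<Rightarrow> nat \<Rightarrow> (nat \<Rightarrow> 'a) set set" where
  "initial_relations I m f d = {coset (IM I m (Suc d)) a | a.
     a \<in> IM I m d \<and> (\<Sum>i<m. a i * f i) \<in> ideal_pow I (Suc (Suc d))}"

lemma form_component_syzygies_subset: "form_component I m (syzygies m f) d \<subseteq> initial_relations I m f d"
proof
  fix X assume "X \<in> form_component I m (syzygies m f) d"
  then obtain x where x: "x \<in> syzygies m f" "x \<in> IM I m d" "X = coset (IM I m (Suc d)) x"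
    by (rule form_componentE)
  then have "(\<Sum>i<m. x i * f i) \<in> ideal_pow I (Suc (Suc d))"
    by (simp add: syzygies_def ideal_zero[OF is_ideal_ideal_pow] del: ideal_pow.simps)
  with x(2,3) show "X \<in> initial_relations I m f d"
    unfolding initial_relations_def by blast
qed

lemma initial_relations_cong:
  assumes fg: "\<And>i. i < m \<Longrightarrow> f i - g i \<in> ideal_pow I 2"
  shows "initial_relations I m f d = initial_relations I m g d"
proof -
  have "(\<Sum>i<m. a i * f i) \<in> ideal_pow I (Suc (Suc d)) \<longleftrightarrow> (\<Sum>i<m. a i * g i) \<in> ideal_pow I (Suc (Suc d))"
    if a: "a \<in> IM I m d" for a
  proof (rule ideal_diff_mem_iff[OF is_ideal_ideal_pow])
    have "a i * (f i - g i) \<in> ideal_pow I (Suc (Suc d))" if "i < m" for i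
      using ideal_pow_mult[of "a i" I d, OF _ fg[OF that]] a that
      by (simp add: IM_def add_2_eq_Suc' del: ideal_pow.simps)
    then have "(\<Sum>i<m. a i * (f i - g i)) \<in> ideal_pow I (Suc (Suc d))"
      by (intro ideal_sum[OF is_ideal_ideal_pow]) simp
    then show "(\<Sum>i<m. a i * f i) - (\<Sum>i<m. a i * g i) \<in> ideal_pow I (Suc (Suc d))"
      by (simp add: sum_subtractf right_diff_distrib)
  qed
  then show ?thesis unfolding initial_relations_def by blast
qed

lemma initial_relations_subset_form_component:
  assumes descent: "lin_comb f m UNIV \<inter> ideal_pow I (Suc (Suc d)) \<subseteq> lin_comb f m (ideal_pow I (Suc d))"
  shows "initial_relations I m f d \<subseteq> form_component I m (syzygies m f) d"
proof
  fix X assume "X \<in> initial_relations I m f d"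
  then obtain a where a: "a \<in> IM I m d" "(\<Sum>i<m. a i * f i) \<in> ideal_pow I (Suc (Suc d))"
    "X = coset (IM I m (Suc d)) a" unfolding initial_relations_def by blast
  have "(\<Sum>i<m. a i * f i) \<in> lin_comb f m (ideal_pow I (Suc d))"
    using descent a(2) lin_comb_memI[of m a UNIV] by blast
  then obtain c where c: "\<And>i. i < m \<Longrightarrow> c i \<in> ideal_pow I (Suc d)"
    "(\<Sum>i<m. a i * f i) = (\<Sum>i<m. c i * f i)"
    by (elim lin_comb_memE) blast
  define b where "b = (\<lambda>i. if i < m then a i - c i else 0)"
  have "(\<Sum>i<m. b i * f i) = (\<Sum>i<m. a i * f i) - (\<Sum>i<m. c i * f i)"
    unfolding b_def by (simp add: sum_subtractf left_diff_distrib)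
  then have "b \<in> syzygies m f" using c(2) unfolding syzygies_def vecs_def b_def by simp
  moreover have "b \<in> IM I m d"
    using a(1) c(1) ideal_pow_Suc_subset[of I d] unfolding b_def IM_def vecs_def
    by (auto intro!: ideal_diff[OF is_ideal_ideal_pow])
  moreover have "coset (IM I m (Suc d)) a = coset (IM I m (Suc d)) b"
    unfolding coset_eq_iff[OF additive_subgroup_IM]
    using a(1) c(1) unfolding b_def IM_def vecs_def by auto
  ultimately show "X \<in> form_component I m (syzygies m f) d"
    using a(3) by (intro form_componentI) auto
qed

lemma lin_comb_descent_of_initial_relations:
  assumes rel: "\<And>d. initial_relations I m f d \<subseteq> form_component I m (syzygies m f) d"
    and s: "s \<in> lin_comb f m UNIV" "s \<in> ideal_pow I (Suc d)"
  shows "k \<le> d \<Longrightarrow> s \<in> lin_comb f m (ideal_pow I k)"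
proof (induction k)
  case 0
  then show ?case using s(1) by simp
next
  case (Suc k)
  then have "s \<in> lin_comb f m (ideal_pow I k)" by simp
  then obtain c where c: "\<And>i. i < m \<Longrightarrow> c i \<in> ideal_pow I k" "s = (\<Sum>i<m. c i * f i)"
    by (elim lin_comb_memE) blast
  define a where "a = (\<lambda>i. if i < m then c i else 0)"
  have a: "a \<in> IM I m k" using c(1) unfolding a_def IM_def vecs_def by auto
  have sa: "s = (\<Sum>i<m. a i * f i)" unfolding a_def c(2) by simp
  have "s \<in> ideal_pow I (Suc (Suc k))"
    using s(2) ideal_pow_antimono[of "Suc (Suc k)" "Suc d" I] Suc.prems by auto
  then have "coset (IM I m (Suc k)) a \<in> form_component I m (syzygies m f) k"
    using rel a sa unfolding initial_relations_def by blast
  then obtain b where b: "b \<in> syzygies m f" "coset (IM I m (Suc k)) a = coset (IM I m (Suc k)) b"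
    by (rule form_componentE)
  have ab: "(\<lambda>i. a i - b i) \<in> IM I m (Suc k)"
    using b(2) coset_eq_iff[OF additive_subgroup_IM] by blast
  have "(\<Sum>i<m. (a i - b i) * f i) = (\<Sum>i<m. a i * f i) - (\<Sum>i<m. b i * f i)"
    by (simp add: sum_subtractf left_diff_distrib)
  also have "\<dots> = s" using sa b(1) by (simp add: syzygies_def)
  finally show ?case using ab by (intro lin_comb_memI[of _ "\<lambda>i. a i - b i"]) (auto simp: IM_def)
qed

lemma aluffi_torsion_free_iff_initial_relations:
  assumes "\<And>i. i < m \<Longrightarrow> f i \<in> I"
  shows "aluffi_torsion_free (ideal_gen (f ` {..<m})) I \<longleftrightarrow>
    (\<forall>d. initial_relations I m f d = form_component I m (syzygies m f) d)"
proof -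
  have "aluffi_torsion_free (ideal_gen (f ` {..<m})) I \<longleftrightarrow>
    (\<forall>d. lin_comb f m UNIV \<inter> ideal_pow I (Suc d) \<subseteq> lin_comb f m (ideal_pow I d))"
    by (rule aluffi_torsion_free_iff_lin_comb[OF assms])
  also have "\<dots> \<longleftrightarrow> (\<forall>d. initial_relations I m f d \<subseteq> form_component I m (syzygies m f) d)"
  proof
    assume "\<forall>d. lin_comb f m UNIV \<inter> ideal_pow I (Suc d) \<subseteq> lin_comb f m (ideal_pow I d)"
    then show "\<forall>d. initial_relations I m f d \<subseteq> form_component I m (syzygies m f) d"
      using initial_relations_subset_form_component by blast
  next
    assume rel: "\<forall>d. initial_relations I m f d \<subseteq> form_component I m (syzygies m f) d"
    show "\<forall>d. lin_comb f m UNIV \<inter> ideal_pow I (Suc d) \<subseteq> lin_comb f m (ideal_pow I d)"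
      using lin_comb_descent_of_initial_relations[of I m f, OF rel[rule_format]] by blast
  qed
  also have "\<dots> \<longleftrightarrow> (\<forall>d. initial_relations I m f d = form_component I m (syzygies m f) d)"
    using form_component_syzygies_subset[of I m f] by (simp add: set_eq_subset)
  finally show ?thesis .
qed

theorem corollary2p8:
  fixes I :: "'a::comm_ring_1 set" and f g :: "nat \<Rightarrow> 'a" and m :: nat
  assumes "noetherian_ring TYPE('a)"
    and "is_ideal I"
    and "ideal_gen (f ` {..<m}) \<subseteq> I"
    and "ideal_gen (g ` {..<m}) \<subseteq> I"
    and "\<forall>i<m. f i - g i \<in> ideal_pow I 2"
    and "aluffi_torsion_free (ideal_gen (f ` {..<m})) I"
  shows "aluffi_torsion_free (ideal_gen (g ` {..<m})) I \<longleftrightarrow>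
         form_module I m (syzygies m f) = form_module I m (syzygies m g)"
proof -
  have f_in_I: "f i \<in> I" and g_in_I: "g i \<in> I" if "i < m" for i
    using assms(3,4) ideal_gen_subset[of "f ` {..<m}"] ideal_gen_subset[of "g ` {..<m}"] that
    by auto
  have "\<forall>d. initial_relations I m f d = form_component I m (syzygies m f) d"
    by (rule iffD1[OF aluffi_torsion_free_iff_initial_relations[OF f_in_I] assms(6)])
  then have "form_component I m (syzygies m f) d = initial_relations I m g d" for d
    using initial_relations_cong[of m f g I d] assms(5) by simp
  then have "form_module I m (syzygies m f) = form_module I m (syzygies m g) \<longleftrightarrow>
      (\<forall>d. initial_relations I m g d = form_component I m (syzygies m g) d)"
    unfolding form_module_eq_iff_form_components_eq[OF is_submodule_syzygies is_submodule_syzygies]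
    by simp
  also have "\<dots> \<longleftrightarrow> aluffi_torsion_free (ideal_gen (g ` {..<m})) I"
    by (rule aluffi_torsion_free_iff_initial_relations[OF g_in_I, symmetric])
  finally show ?thesis by (rule sym)
qed

end
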